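(* Let $X$ be a stacked simplicial complex of dimension $d$ and $c$ a codimension one face of $X$. Let $m\ge 1$ and let $v\in V_m\setminus V_{m-1}$. Then there is a unique facet $f_v$ in $X_m$ containing $v$, and $f_v\setminus\{v\}\subseteq V_{m-1}$.
   Context: A simplicial complex $X$ on a finite vertex set $V$ is a family of subsets (faces) of $V$ closed under taking subsets, every element of $V$ lying in some face; facets are inclusion-maximal faces. $X$ is pure of dimension $d$ if every facet has $d+1$ elements; a codimension one face is a face with $d$ elements. $X$ is stacked if it is pure of some dimension $d$ and its facets can be ordered $F_0,F_1,\dots,F_k$ such that for each $p\ge 1$, $F_p$ contains exactly one vertex $v_p$ not in $F_0\cup\dots\cup F_{p-1}$, and $F_p\setminus\{v_p\}\subseteq F_j$ for some $j<p$. A walk is a sequence of facets $f_1,\dots,f_p$ ($p\ge 1$) such that each $f_i\cap f_{i+1}$ has exactly $d$ elements. Fix a codimension one face $c$. The distance from a facet $f$ to $c$ is the minimal $r\ge1$ such that there is a walk $f_1,\dots,f_r$ with $f_1=f$ and $c\subseteq f_r$. For $m\ge 0$, $X_m$ is the set of facets at distance $\le m$ from $c$ (so $X_0=\emptyset$ and $X_1$ is the set of facets containing $c$). $V_0$ is the vertex set of $c$, and for $m\ge1$, $V_m$ is the set of vertices lying in some facet of $X_m$. *)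

theory Defs
  imports Main "HOL-Library.Extended_Nat"
begin

definition simplicial_complex :: "'a set \<Rightarrow> 'a set set \<Rightarrow> bool" where
  "simplicial_complex V X \<longleftrightarrow> finite V \<and> (\<forall>F\<in>X. F \<subseteq> V)
     \<and> (\<forall>F\<in>X. \<forall>G. G \<subseteq> F \<longrightarrow> G \<in> X) \<and> (\<forall>v\<in>V. \<exists>F\<in>X. v \<in> F)"

definition facets :: "'a set set \<Rightarrow> 'a set set" where
  "facets X = {F \<in> X. \<forall>G\<in>X. F \<subseteq> G \<longrightarrow> G = F}"

definition pure :: "'a set set \<Rightarrow> nat \<Rightarrow> bool" where
  "pure X d \<longleftrightarrow> (\<forall>F\<in>facets X. card F = d + 1)"

definition stacked :: "'a set set \<Rightarrow> bool" where
  "stacked X \<longleftrightarrow> (\<exists>d. pure X d) \<and>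
     (\<exists>fs. fs \<noteq> [] \<and> distinct fs \<and> set fs = facets X \<and>
        (\<forall>p. 1 \<le> p \<and> p < length fs \<longrightarrow>
           (\<exists>v. fs ! p - \<Union>(set (take p fs)) = {v} \<and>
                (\<exists>j<p. fs ! p - {v} \<subseteq> fs ! j))))"

definition walk :: "'a set set \<Rightarrow> nat \<Rightarrow> 'a set list \<Rightarrow> bool" where
  "walk X d ws \<longleftrightarrow> ws \<noteq> [] \<and> set ws \<subseteq> facets X \<and>
     (\<forall>i. Suc i < length ws \<longrightarrow> card (ws ! i \<inter> ws ! Suc i) = d)"

text \<open>Distance from facet f to the codimension one face c (\<infinity> if no walk exists).\<close>
definition facet_dist :: "'a set set \<Rightarrow> nat \<Rightarrow> 'a set \<Rightarrow> 'a set \<Rightarrow> enat" where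
  "facet_dist X d c f = Inf {enat r | r. r \<ge> 1 \<and>
      (\<exists>ws. walk X d ws \<and> length ws = r \<and> hd ws = f \<and> c \<subseteq> last ws)}"

definition Xm :: "'a set set \<Rightarrow> nat \<Rightarrow> 'a set \<Rightarrow> nat \<Rightarrow> 'a set set" where
  "Xm X d c m = {f \<in> facets X. facet_dist X d c f \<le> enat m}"

definition Vm :: "'a set set \<Rightarrow> nat \<Rightarrow> 'a set \<Rightarrow> nat \<Rightarrow> 'a set" where
  "Vm X d c m = (if m = 0 then c else \<Union>(Xm X d c m))"

end

theory Submission
  imports Defs
begin

text \<open>
The facets at distance at most m from c are computed layer by layer: layer m+1 consists of
the facets containing c or sharing a ridge with a facet of layer m. If v first appears in
layer m, any facet f of layer m containing v meets a facet of layer m-1 (or c itself) in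
f - {v}, which gives the containment.

Uniqueness is proved by induction along the stacking order: adding a facet F along the ridge
F - {u} of an older facet, with new vertex u. If u is not in c, every facet reached through F
is also reached through the older facets containing F - {u}, so the layers of the older facets
do not change and F can only be the facet in which u itself first appears. If u is in c, then
F is the only facet containing c, and the layers beyond it are the layers of the older facets
around the ridge F - {u}, shifted by one, so the claim follows from the induction hypothesis
applied to that ridge.
\<close>

fun layer :: "'a set set \<Rightarrow> nat \<Rightarrow> 'a set \<Rightarrow> nat \<Rightarrow> 'a set set" where
  "layer S d c 0 = {}"
| "layer S d c (Suc m) = {f \<in> S. c \<subseteq> f \<or> (\<exists>g\<in>layer S d c m. card (f \<inter> g) = d)}"

lemma layer_subset: "layer S d c m \<subseteq> S"
  by (cases m) auto

lemma layer_mono_Suc: "layer S d c m \<subseteq> layer S d c (Suc m)"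
  by (induction m) (auto 0 3)

lemma layer_mono: "m \<le> n \<Longrightarrow> layer S d c m \<subseteq> layer S d c n"
  by (induction n rule: dec_induct) (use layer_mono_Suc in blast)+

lemma layer_Suc_iff:
  "f \<in> layer S d c (Suc m) \<longleftrightarrow> f \<in> S \<and> (c \<subseteq> f \<or> (\<exists>g\<in>layer S d c m. card (f \<inter> g) = d))"
  by simp

lemma layer_mono_family: "S \<subseteq> S' \<Longrightarrow> layer S d c m \<subseteq> layer S' d c m"
  by (induction m) auto

lemma layer_member_imp_superset: "f \<in> layer S d c m \<Longrightarrow> \<exists>h\<in>S. c \<subseteq> h"
  by (induction m arbitrary: f) auto

lemma walk_Cons:
  assumes "ws \<noteq> []"
  shows "walk X d (f # ws) \<longleftrightarrow> f \<in> facets X \<and> card (f \<inter> hd ws) = d \<and> walk X d ws"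
proof -
  obtain w ws' where ws: "ws = w # ws'" using assms by (cases ws) auto
  have "(\<forall>i. Suc i < length (f # ws) \<longrightarrow> card ((f # ws) ! i \<inter> (f # ws) ! Suc i) = d) \<longleftrightarrow>
        card (f \<inter> w) = d \<and> (\<forall>i. Suc i < length ws \<longrightarrow> card (ws ! i \<inter> ws ! Suc i) = d)"
    unfolding ws by (auto simp: less_Suc_eq_0_disj)
  then show ?thesis
    using ws by (auto simp: walk_def)
qed

lemma walk_to_face_in_layer:
  "walk X d ws \<Longrightarrow> c \<subseteq> last ws \<Longrightarrow> hd ws \<in> layer (facets X) d c (length ws)"
proof (induction ws)
  case (Cons f ws)
  show ?case
  proof (cases "ws = []")
    case True
    with Cons.prems show ?thesis by (auto simp: walk_def)
  next
    case False
    with Cons show ?thesis by (auto simp: walk_Cons)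
  qed
qed (simp add: walk_def)

lemma layer_imp_walk_to_face:
  "f \<in> layer (facets X) d c m \<Longrightarrow>
    \<exists>ws. walk X d ws \<and> hd ws = f \<and> c \<subseteq> last ws \<and> length ws \<le> m"
proof (induction m arbitrary: f)
  case (Suc m)
  then have f: "f \<in> facets X" by simp
  show ?case
  proof (cases "c \<subseteq> f")
    case True
    with f show ?thesis by (intro exI[of _ "[f]"]) (auto simp: walk_def)
  next
    case False
    with Suc.prems obtain g where g: "g \<in> layer (facets X) d c m" "card (f \<inter> g) = d"
      by auto
    from Suc.IH[OF g(1)] obtain ws where ws: "walk X d ws" "hd ws = g" "c \<subseteq> last ws" "length ws \<le> m"
      by blast
    then have "ws \<noteq> []" by (simp add: walk_def)
    with f g(2) ws show ?thesis
      by (intro exI[of _ "f # ws"]) (auto simp: walk_Cons)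
  qed
qed simp

lemma enat_Inf_le_iff: "Inf (A :: enat set) \<le> enat m \<longleftrightarrow> (\<exists>x\<in>A. x \<le> enat m)"
proof
  assume le: "Inf A \<le> enat m"
  then have "A \<noteq> {}" by (auto simp: Inf_enat_def)
  then have "Inf A \<in> A" by (auto intro: wellorder_InfI)
  with le show "\<exists>x\<in>A. x \<le> enat m" by blast
qed (meson Inf_lower order_trans)

lemma facet_dist_le_iff:
  "facet_dist X d c f \<le> enat m \<longleftrightarrow>
    (\<exists>ws. walk X d ws \<and> hd ws = f \<and> c \<subseteq> last ws \<and> length ws \<le> m)"
proof
  assume "facet_dist X d c f \<le> enat m"
  then show "\<exists>ws. walk X d ws \<and> hd ws = f \<and> c \<subseteq> last ws \<and> length ws \<le> m"
    unfolding facet_dist_def enat_Inf_le_iff by auto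
next
  assume "\<exists>ws. walk X d ws \<and> hd ws = f \<and> c \<subseteq> last ws \<and> length ws \<le> m"
  then obtain ws where ws: "walk X d ws" "hd ws = f" "c \<subseteq> last ws" "length ws \<le> m"
    by blast
  then have "1 \<le> length ws"
    by (cases ws) (simp_all add: walk_def)
  with ws show "facet_dist X d c f \<le> enat m"
    unfolding facet_dist_def enat_Inf_le_iff by (intro bexI[of _ "enat (length ws)"]) auto
qed

lemma Xm_eq_layer: "Xm X d c m = layer (facets X) d c m"
proof (intro set_eqI iffI)
  fix f assume "f \<in> Xm X d c m"
  then obtain ws where "walk X d ws" "hd ws = f" "c \<subseteq> last ws" "length ws \<le> m"
    unfolding Xm_def facet_dist_le_iff by blast
  then show "f \<in> layer (facets X) d c m"
    using walk_to_face_in_layer layer_mono[of "length ws" m] by blast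
next
  fix f assume f: "f \<in> layer (facets X) d c m"
  then have "facet_dist X d c f \<le> enat m"
    unfolding facet_dist_le_iff by (rule layer_imp_walk_to_face)
  with f show "f \<in> Xm X d c m"
    using layer_subset unfolding Xm_def by blast
qed

lemma face_subset_facet:
  assumes "simplicial_complex V X" "c \<in> X"
  obtains h where "h \<in> facets X" "c \<subseteq> h"
proof -
  have "X \<subseteq> Pow V" "finite V"
    using assms(1) unfolding simplicial_complex_def by blast+
  then have fin: "finite {G \<in> X. c \<subseteq> G}"
    using finite_subset by fastforce
  have "{G \<in> X. c \<subseteq> G} \<noteq> {}"
    using assms(2) by blast
  from finite_has_maximal[OF fin this] obtain h where h: "h \<in> X" "c \<subseteq> h"
    and max: "\<forall>G\<in>{G \<in> X. c \<subseteq> G}. h \<le> G \<longrightarrow> h = G"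
    by blast
  have "h \<in> facets X"
    unfolding facets_def using h max by auto
  with h show ?thesis
    using that by blast
qed

lemma Vm_eq_layer: "Vm X d c m = (if m = 0 then c else \<Union>(layer (facets X) d c m))"
  by (simp add: Vm_def Xm_eq_layer)

lemma face_subset_Union_layer:
  assumes "simplicial_complex V X" "c \<in> X" "k \<noteq> 0"
  shows "c \<subseteq> \<Union>(layer (facets X) d c k)"
proof -
  obtain h where h: "h \<in> facets X" "c \<subseteq> h"
    using face_subset_facet assms(1,2) .
  then have "h \<in> layer (facets X) d c (Suc 0)"
    by simp
  with assms(3) have "h \<in> layer (facets X) d c k"
    using layer_mono[of "Suc 0" k "facets X" d c] by auto
  with h(2) show ?thesis by blast
qed

lemma card_Int_eq_iff_Diff_subset:
  assumes "card F = Suc d" "u \<in> F" "u \<notin> f"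
  shows "card (f \<inter> F) = d \<longleftrightarrow> F - {u} \<subseteq> f"
proof -
  have fin: "finite (F - {u})" and card: "card (F - {u}) = d"
    using assms(1,2) card.infinite by fastforce+
  have eq: "f \<inter> F = f \<inter> (F - {u})"
    using assms(3) by blast
  show ?thesis
  proof
    assume "card (f \<inter> F) = d"
    then have "f \<inter> (F - {u}) = F - {u}"
      using card_seteq[OF fin, of "f \<inter> (F - {u})"] card eq by simp
    then show "F - {u} \<subseteq> f" by blast
  next
    assume "F - {u} \<subseteq> f"
    then have "f \<inter> (F - {u}) = F - {u}" by blast
    then show "card (f \<inter> F) = d"
      using card eq by simp
  qed
qed

lemma card_Int_eq_if_common_subset:
  assumes "card f = Suc d" "card g = Suc d" "f \<noteq> g" "B \<subseteq> f \<inter> g" "card B = d"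
  shows "card (f \<inter> g) = d"
proof -
  have fin: "finite f" "finite g"
    using assms(1,2) card.infinite by fastforce+
  have "\<not> f \<subseteq> g"
    using card_seteq[OF fin(2), of f] assms(1-3) by auto
  then have "f \<inter> g \<subset> f" by blast
  then have "card (f \<inter> g) < Suc d"
    using psubset_card_mono[OF fin(1)] assms(1) by simp
  moreover have "d \<le> card (f \<inter> g)"
    using card_mono[of "f \<inter> g" B] fin assms(4,5) by simp
  ultimately show ?thesis by simp
qed

lemma layer_Suc_minus_vertex:
  assumes card: "\<And>f. f \<in> S \<Longrightarrow> card f = Suc d" and "card c = d"
    and f: "f \<in> layer S d c (Suc k)" "v \<in> f" and new: "v \<notin> c" "v \<notin> \<Union>(layer S d c k)"
  shows "f - {v} \<subseteq> (if k = 0 then c else \<Union>(layer S d c k))"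
proof -
  have "finite (f - {v})" "card (f - {v}) = d"
    using card[of f] f layer_subset card.infinite by fastforce+
  note eq_if_card = card_seteq[OF this(1), simplified this(2)]
  show ?thesis
  proof (cases "c \<subseteq> f")
    case True
    have "k = 0"
    proof (rule ccontr)
      assume "k \<noteq> 0"
      moreover have "f \<in> layer S d c (Suc 0)"
        using True layer_subset[THEN subsetD, OF f(1)] by simp
      ultimately have "f \<in> layer S d c k"
        using layer_mono[of "Suc 0" k S d c] by auto
      with f(2) new(2) show False by blast
    qed
    moreover have "c = f - {v}"
      using True new(1) eq_if_card[of c] \<open>card c = d\<close> by blast
    ultimately show ?thesis by simp
  next
    case False
    with f(1) obtain g where g: "g \<in> layer S d c k" "card (f \<inter> g) = d"
      by auto
    then have "k \<noteq> 0" by (cases k) auto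
    have "v \<notin> g"
      using g(1) new(2) by blast
    then have "f \<inter> g = f - {v}"
      using eq_if_card[of "f \<inter> g"] g(2) by blast
    with g(1) \<open>k \<noteq> 0\<close> show ?thesis by auto
  qed
qed

locale new_facet =
  fixes S :: "'a set set" and F :: "'a set" and u :: 'a and d :: nat
  assumes card_old: "f \<in> S \<Longrightarrow> card f = Suc d"
    and card_new: "card F = Suc d"
    and new_vertex: "u \<in> F" "u \<notin> \<Union>S"
begin

lemma card_ridge: "card (F - {u}) = d"
proof -
  have "finite F"
    using card_new card.infinite by fastforce
  then show ?thesis
    using card_new new_vertex(1) by (simp add: card_Diff_singleton)
qed

lemma ridge_eq_if_card: "A \<subseteq> F - {u} \<Longrightarrow> card A = d \<Longrightarrow> A = F - {u}"
  using card_seteq[of "F - {u}" A] card_ridge card_new card.infinite by fastforce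

lemma adjacent_iff: "f \<in> S \<Longrightarrow> card (f \<inter> F) = d \<longleftrightarrow> F - {u} \<subseteq> f"
  using new_vertex(2) by (intro card_Int_eq_iff_Diff_subset[OF card_new new_vertex(1)]) blast

lemma new_facet_in_layer_Suc:
  assumes "F \<in> layer (insert F S) d c (Suc m)"
  shows "c \<subseteq> F \<or> (\<exists>g\<in>S. g \<in> layer (insert F S) d c m \<and> F - {u} \<subseteq> g)"
proof (cases "c \<subseteq> F")
  case False
  with assms obtain g where g: "g \<in> layer (insert F S) d c m" "card (F \<inter> g) = d"
    by auto
  moreover have "g \<noteq> F"
    using g(2) card_new by auto
  ultimately have "g \<in> S"
    using layer_subset by blast
  moreover have "F - {u} \<subseteq> g"
    using adjacent_iff[OF \<open>g \<in> S\<close>] g(2) by (simp add: Int_commute)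
  ultimately show ?thesis
    using g(1) by blast
qed simp

lemma new_facet_ridge_in_previous_layer:
  assumes "u \<notin> c" "card c = d" "F \<in> layer (insert F S) d c (Suc k)"
  shows "F - {u} \<subseteq> c \<union> \<Union>(layer (insert F S) d c k)"
  using new_facet_in_layer_Suc[OF assms(3)]
proof
  assume "c \<subseteq> F"
  with assms(1,2) have "c = F - {u}"
    using ridge_eq_if_card by blast
  then show ?thesis by blast
qed blast

lemma layer_insert_restrict:
  assumes "u \<notin> c"
  shows "f \<in> S \<Longrightarrow> f \<in> layer (insert F S) d c m \<Longrightarrow> f \<in> layer S d c m"
proof (induction m arbitrary: f)
  case (Suc m)
  show ?case
  proof (cases "c \<subseteq> f")
    case False
    with Suc.prems obtain g where g: "g \<in> layer (insert F S) d c m" "card (f \<inter> g) = d"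
      by auto
    show ?thesis
    proof (cases "g \<in> S")
      case True
      with Suc.IH g Suc.prems(1) show ?thesis by auto
    next
      case False
      with g(1) layer_subset have "g = F" by blast
      with g(2) Suc.prems(1) have ridge_f: "F - {u} \<subseteq> f"
        using adjacent_iff by simp
      from g(1) obtain m' where m: "m = Suc m'"
        by (cases m) auto
      have "\<not> c \<subseteq> F"
        using \<open>\<not> c \<subseteq> f\<close> ridge_f assms by blast
      with g(1) \<open>g = F\<close> m obtain g' where
        g': "g' \<in> S" "g' \<in> layer (insert F S) d c m'" "F - {u} \<subseteq> g'"
        using new_facet_in_layer_Suc by blast
      then have "g' \<in> layer S d c m"
        using Suc.IH layer_mono_Suc m by blast
      \<comment> \<open>f and g' share the ridge F - {u}, so the step through F can be bypassed\<close>
      moreover have "f = g' \<or> card (f \<inter> g') = d"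
        using card_Int_eq_if_common_subset[of f d g' "F - {u}"] card_old Suc.prems(1) g'(1)
          ridge_f g'(3) card_ridge by blast
      ultimately show ?thesis
        using Suc.prems(1) layer_mono_Suc[of S d c m] by auto
    qed
  qed (use Suc.prems in simp)
qed simp

lemma first_facet_in_old_layer:
  assumes "u \<notin> c" "card c = d" "v \<noteq> u" "v \<notin> c" "v \<notin> \<Union>(layer (insert F S) d c k)"
    and f: "f \<in> layer (insert F S) d c (Suc k)" "v \<in> f"
  shows "f \<in> layer S d c (Suc k)"
proof -
  have "f \<in> S"
  proof (rule ccontr)
    assume "f \<notin> S"
    with layer_subset[THEN subsetD, OF f(1)] have "f = F" by simp
    with assms(1-3) f have "v \<in> c \<union> \<Union>(layer (insert F S) d c k)"
      using new_facet_ridge_in_previous_layer by blast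
    with assms(4,5) show False by blast
  qed
  with f(1) show ?thesis
    using layer_insert_restrict[OF assms(1)] by blast
qed

lemma new_vertex_face_subset:
  assumes "u \<in> c" "f \<in> layer (insert F S) d c m"
  shows "c \<subseteq> F"
proof -
  obtain h where h: "h \<in> insert F S" "c \<subseteq> h"
    using layer_member_imp_superset[OF assms(2)] by blast
  have "h \<notin> S"
    using h(2) assms(1) new_vertex(2) by blast
  with h show ?thesis by simp
qed

lemma layer_insert_root:
  assumes "u \<in> c" "c \<subseteq> F"
  shows "layer (insert F S) d c (Suc k) = insert F (layer S d (F - {u}) k)"
proof (induction k)
  case 0
  show ?case
    using assms new_vertex by auto
next
  case (Suc k)
  show ?case
  proof (intro set_eqI)
    fix f
    show "f \<in> layer (insert F S) d c (Suc (Suc k)) \<longleftrightarrow> f \<in> insert F (layer S d (F - {u}) (Suc k))"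
    proof (cases "f \<in> S")
      case True
      then have "\<not> c \<subseteq> f" "f \<noteq> F"
        using assms(1) new_vertex by auto
      have "f \<in> layer (insert F S) d c (Suc (Suc k)) \<longleftrightarrow>
          (\<exists>g\<in>insert F (layer S d (F - {u}) k). card (f \<inter> g) = d)"
        using True \<open>\<not> c \<subseteq> f\<close>
        by (simp only: layer_Suc_iff[of f "insert F S" d c "Suc k"] Suc.IH) simp
      also have "\<dots> \<longleftrightarrow> F - {u} \<subseteq> f \<or> (\<exists>g\<in>layer S d (F - {u}) k. card (f \<inter> g) = d)"
        using adjacent_iff[OF True] by simp
      also have "\<dots> \<longleftrightarrow> f \<in> insert F (layer S d (F - {u}) (Suc k))"
        using True \<open>f \<noteq> F\<close> by simp
      finally show ?thesis .
    next
      case False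
      have "F \<in> layer (insert F S) d c (Suc (Suc k))"
        using assms(2) by simp
      moreover have "layer (insert F S) d c (Suc (Suc k)) \<subseteq> insert F S"
        "layer S d (F - {u}) (Suc k) \<subseteq> S"
        by (rule layer_subset)+
      ultimately show ?thesis
        using False by blast
    qed
  qed
qed

end

text \<open>Unlike stacked, this does not require the family to be the facet set of a complex, so it
holds for every initial segment of a stacking order.\<close>
inductive stacked_family :: "nat \<Rightarrow> 'a set set \<Rightarrow> bool" for d where
  single: "card F = Suc d \<Longrightarrow> stacked_family d {F}"
| insert: "\<lbrakk>stacked_family d S; card F = Suc d; u \<in> F; u \<notin> \<Union>S; g \<in> S; F - {u} \<subseteq> g\<rbrakk>
    \<Longrightarrow> stacked_family d (insert F S)"

lemma stacked_family_card: "stacked_family d S \<Longrightarrow> f \<in> S \<Longrightarrow> card f = Suc d"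
  by (induction rule: stacked_family.induct) auto

lemma stacked_imp_stacked_family:
  assumes "stacked X" "pure X d"
  shows "stacked_family d (facets X)"
proof -
  obtain fs where fs: "fs \<noteq> []" "set fs = facets X"
    and step: "\<And>p. 1 \<le> p \<Longrightarrow> p < length fs \<Longrightarrow>
      \<exists>u. fs ! p - \<Union>(set (take p fs)) = {u} \<and> (\<exists>j<p. fs ! p - {u} \<subseteq> fs ! j)"
    using assms(1) unfolding stacked_def by blast
  have card: "card (fs ! p) = Suc d" if "p < length fs" for p
    using assms(2) fs(2) nth_mem[OF that] unfolding pure_def by simp
  have "stacked_family d (set (take (Suc n) fs))" if "n < length fs" for n
    using that
  proof (induction n)
    case 0
    then have "take (Suc 0) fs = [fs ! 0]"
      by (simp add: take_Suc_conv_app_nth)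
    with stacked_family.single[OF card[OF 0]] show ?case
      by simp
  next
    case (Suc n)
    obtain u j where u: "fs ! Suc n - \<Union>(set (take (Suc n) fs)) = {u}"
      and j: "j < Suc n" "fs ! Suc n - {u} \<subseteq> fs ! j"
      using step[of "Suc n"] Suc.prems by auto
    have "fs ! j \<in> set (take (Suc n) fs)"
      using j(1) Suc.prems by (auto simp: in_set_conv_nth intro!: exI[of _ j])
    moreover have "u \<in> fs ! Suc n" "u \<notin> \<Union>(set (take (Suc n) fs))"
      using u by blast+
    moreover have "set (take (Suc (Suc n)) fs) = insert (fs ! Suc n) (set (take (Suc n) fs))"
      using take_Suc_conv_app_nth[OF Suc.prems] by simp
    ultimately show ?case
      using stacked_family.insert[OF _ card[OF Suc.prems]] Suc j(2) by simp
  qed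
  from this[of "length fs - 1"] fs show ?thesis
    by simp
qed

lemma stacked_family_layer_unique:
  assumes "stacked_family d S" "card c = d" "v \<notin> c" "v \<notin> \<Union>(layer S d c k)"
    and "f \<in> layer S d c (Suc k)" "v \<in> f" "f' \<in> layer S d c (Suc k)" "v \<in> f'"
  shows "f = f'"
  using assms
proof (induction arbitrary: c k f f' rule: stacked_family.induct)
  case (single F)
  show ?case
    using layer_subset[THEN subsetD, OF single.prems(4)] layer_subset[THEN subsetD, OF single.prems(6)]
    by simp
next
  case (insert S F u g0)
  interpret new_facet S F u d
    by (rule new_facet.intro[OF stacked_family_card[OF insert.hyps(1)] insert.hyps(2-4)])
  show ?case
  proof (cases "u \<in> c")
    case True
    note root = layer_insert_root[OF True new_vertex_face_subset[OF True insert.prems(4)]]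
    show ?thesis
    proof (cases k)
      case 0
      then show ?thesis
        using insert.prems(4,6) unfolding root by simp
    next
      case (Suc j)
      have "v \<notin> F" and v_notin_prev: "v \<notin> \<Union>(layer S d (F - {u}) j)"
        using insert.prems(3) unfolding Suc root by simp_all
      then have "v \<notin> F - {u}" by blast
      have "f \<in> layer S d (F - {u}) k" "f' \<in> layer S d (F - {u}) k"
        using insert.prems(4-7) \<open>v \<notin> F\<close> unfolding root by auto
      then show ?thesis
        using insert.IH[OF card_ridge \<open>v \<notin> F - {u}\<close> v_notin_prev] insert.prems(5,7) Suc by simp
    qed
  next
    case False
    show ?thesis
    proof (cases "v = u")
      case True
      have "f \<notin> S" "f' \<notin> S"
        using insert.prems(5,7) True insert.hyps(4) by blast+
      with layer_subset[THEN subsetD, OF insert.prems(4)] layer_subset[THEN subsetD, OF insert.prems(6)]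
      show ?thesis by simp
    next
      case False
      have "f \<in> layer S d c (Suc k)" "f' \<in> layer S d c (Suc k)"
        using first_facet_in_old_layer[OF \<open>u \<notin> c\<close> insert.prems(1) False insert.prems(2,3)]
          insert.prems(4-7) by blast+
      moreover have "v \<notin> \<Union>(layer S d c k)"
        using insert.prems(3) layer_mono_family[of S "insert F S" d c k] by blast
      ultimately show ?thesis
        using insert.IH[OF insert.prems(1,2)] insert.prems(5,7) by blast
    qed
  qed
qed

theorem lemma2p10:
  fixes V :: "'a set" and X :: "'a set set" and d m :: nat and c :: "'a set" and v :: 'a
  assumes "simplicial_complex V X"
    and "stacked X" and "pure X d"
    and "c \<in> X" and "card c = d"
    and "m \<ge> 1"
    and "v \<in> Vm X d c m - Vm X d c (m - 1)"
  shows "(\<exists>!f. f \<in> Xm X d c m \<and> v \<in> f) \<and>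
         (\<forall>f. f \<in> Xm X d c m \<and> v \<in> f \<longrightarrow> f - {v} \<subseteq> Vm X d c (m - 1))"
proof -
  obtain k where m: "m = Suc k"
    using assms(6) by (cases m) auto
  let ?L = "layer (facets X) d c"
  have Xm: "Xm X d c m = ?L (Suc k)"
    unfolding m by (rule Xm_eq_layer)
  have Vm: "Vm X d c (m - 1) = (if k = 0 then c else \<Union>(?L k))"
    unfolding m Vm_eq_layer by simp
  have new: "v \<notin> c" "v \<notin> \<Union>(?L k)"
    using assms(7) face_subset_Union_layer[OF assms(1,4), of k d] unfolding Vm
    by (cases "k = 0"; auto)+
  from assms(7) obtain f0 where f0: "f0 \<in> ?L (Suc k)" "v \<in> f0"
    unfolding Vm_eq_layer m Xm[unfolded m, symmetric] by auto
  have card: "\<And>f. f \<in> facets X \<Longrightarrow> card f = Suc d"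
    using assms(3) unfolding pure_def by simp
  note unique = stacked_family_layer_unique[OF stacked_imp_stacked_family[OF assms(2,3)] assms(5) new]
  show ?thesis
    unfolding Xm Vm
    using f0 unique layer_Suc_minus_vertex[OF card assms(5) _ _ new] by blast
qed

end
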